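(* Let $G$ and $H$ be graphs. (i) If $*\in\{\Box,\times,\boxtimes\}$ (Cartesian, direct, or strong product), then $\chi_{\mathrm{so}}(G*H)\leq \chi_{\mathrm{so}}(G)\,\chi_{\mathrm{so}}(H)$. (ii) For the lexicographic product, $\chi_{\mathrm{so}}(G\circ H)\leq \chi_{\mathrm{so}}(G)\,(\chi_{\mathrm{so}}(H+K_1)-1)$.
   Context: All graphs are finite, simple and undirected. A strong odd coloring of a graph $G$ is a proper vertex coloring of $G$ such that for every non-isolated vertex $v$ and every color $c$, either no vertex of the open neighborhood $N_G(v)$ has color $c$, or color $c$ is used on an odd number of vertices of $N_G(v)$; $\chi_{\mathrm{so}}(G)$ is the minimum number of colors in such a coloring. $H+K_1$ denotes the graph obtained from $H$ by adding a new vertex adjacent to all vertices of $H$. All products have vertex set $V_G\times V_H$. Cartesian product $G\Box H$: $(g,h)(g',h')$ is an edge iff ($g=g'$ and $hh'\in E_H$) or ($gg'\in E_G$ and $h=h'$). Direct product $G\times H$: edge iff $gg'\in E_G$ and $hh'\in E_H$. Strong product $G\boxtimes H$: edge iff $(g,h)\neq(g',h')$, $g'\in N[g]$ and $h'\in N[h]$ (closed neighborhoods). Lexicographic product $G\circ H$: edge iff $gg'\in E_G$, or ($g=g'$ and $hh'\in E_H$). *)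

theory Defs
  imports Main
begin

definition graph :: "'a set \<Rightarrow> ('a \<Rightarrow> 'a \<Rightarrow> bool) \<Rightarrow> bool" where
  "graph V E \<longleftrightarrow> finite V \<and> (\<forall>x y. E x y \<longrightarrow> x \<in> V \<and> y \<in> V)
     \<and> (\<forall>x y. E x y \<longrightarrow> E y x) \<and> (\<forall>x. \<not> E x x)"

definition nbhd :: "'a set \<Rightarrow> ('a \<Rightarrow> 'a \<Rightarrow> bool) \<Rightarrow> 'a \<Rightarrow> 'a set" where
  "nbhd V E v = {u \<in> V. E v u}"

definition strong_odd_coloring :: "'a set \<Rightarrow> ('a \<Rightarrow> 'a \<Rightarrow> bool) \<Rightarrow> ('a \<Rightarrow> nat) \<Rightarrow> bool" where
  "strong_odd_coloring V E f \<longleftrightarrow>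
     (\<forall>u\<in>V. \<forall>v\<in>V. E u v \<longrightarrow> f u \<noteq> f v) \<and>
     (\<forall>v\<in>V. nbhd V E v \<noteq> {} \<longrightarrow>
        (\<forall>c. card {u \<in> nbhd V E v. f u = c} = 0 \<or> odd (card {u \<in> nbhd V E v. f u = c})))"

definition chi_so :: "'a set \<Rightarrow> ('a \<Rightarrow> 'a \<Rightarrow> bool) \<Rightarrow> nat" where
  "chi_so V E = (LEAST k. \<exists>f. strong_odd_coloring V E f \<and> f ` V \<subseteq> {..<k})"

definition cart_prod_E :: "'a set \<Rightarrow> ('a \<Rightarrow> 'a \<Rightarrow> bool) \<Rightarrow> 'b set \<Rightarrow> ('b \<Rightarrow> 'b \<Rightarrow> bool)
    \<Rightarrow> ('a \<times> 'b) \<Rightarrow> ('a \<times> 'b) \<Rightarrow> bool" where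
  "cart_prod_E VG EG VH EH = (\<lambda>(g,h) (g',h'). g \<in> VG \<and> g' \<in> VG \<and> h \<in> VH \<and> h' \<in> VH \<and>
      ((g = g' \<and> EH h h') \<or> (EG g g' \<and> h = h')))"

definition direct_prod_E :: "'a set \<Rightarrow> ('a \<Rightarrow> 'a \<Rightarrow> bool) \<Rightarrow> 'b set \<Rightarrow> ('b \<Rightarrow> 'b \<Rightarrow> bool)
    \<Rightarrow> ('a \<times> 'b) \<Rightarrow> ('a \<times> 'b) \<Rightarrow> bool" where
  "direct_prod_E VG EG VH EH = (\<lambda>(g,h) (g',h'). g \<in> VG \<and> g' \<in> VG \<and> h \<in> VH \<and> h' \<in> VH \<and>
      EG g g' \<and> EH h h')"

definition strong_prod_E :: "'a set \<Rightarrow> ('a \<Rightarrow> 'a \<Rightarrow> bool) \<Rightarrow> 'b set \<Rightarrow> ('b \<Rightarrow> 'b \<Rightarrow> bool)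
    \<Rightarrow> ('a \<times> 'b) \<Rightarrow> ('a \<times> 'b) \<Rightarrow> bool" where
  "strong_prod_E VG EG VH EH = (\<lambda>(g,h) (g',h'). g \<in> VG \<and> g' \<in> VG \<and> h \<in> VH \<and> h' \<in> VH \<and>
      (g,h) \<noteq> (g',h') \<and> (g' = g \<or> EG g g') \<and> (h' = h \<or> EH h h'))"

definition lex_prod_E :: "'a set \<Rightarrow> ('a \<Rightarrow> 'a \<Rightarrow> bool) \<Rightarrow> 'b set \<Rightarrow> ('b \<Rightarrow> 'b \<Rightarrow> bool)
    \<Rightarrow> ('a \<times> 'b) \<Rightarrow> ('a \<times> 'b) \<Rightarrow> bool" where
  "lex_prod_E VG EG VH EH = (\<lambda>(g,h) (g',h'). g \<in> VG \<and> g' \<in> VG \<and> h \<in> VH \<and> h' \<in> VH \<and>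
      (EG g g' \<or> (g = g' \<and> EH h h')))"

text \<open>H + K_1: new vertex None adjacent to every (Some) vertex of H.\<close>
definition cone_V :: "'b set \<Rightarrow> 'b option set" where
  "cone_V V = insert None (Some ` V)"

fun cone_E :: "'b set \<Rightarrow> ('b \<Rightarrow> 'b \<Rightarrow> bool) \<Rightarrow> 'b option \<Rightarrow> 'b option \<Rightarrow> bool" where
  "cone_E V E (Some x) (Some y) = E x y"
| "cone_E V E None (Some y) = (y \<in> V)"
| "cone_E V E (Some x) None = (x \<in> V)"
| "cone_E V E None None = False"

end

theory Submission
  imports Defs
begin

text \<open>Colour a vertex \<open>(x, y)\<close> of a product by the pair \<open>(f x, g y)\<close> of strong odd colourings
  of the factors, encoded as the number \<open>f x * b + g y\<close>. In each of the four products the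
  neighbourhood of \<open>(x, y)\<close> is the union of a rectangle \<open>N\<^sub>G(x) \<times> B\<close> and a segment
  \<open>{x} \<times> C\<close>, where \<open>B\<close> is \<open>{y}\<close>, \<open>N\<^sub>H(y)\<close>, \<open>N\<^sub>H[y]\<close> or \<open>V\<^sub>H\<close> and \<open>C\<close> is empty or \<open>N\<^sub>H(y)\<close>. A colour
  class of a rectangle is a product of colour classes of its sides. For the lexicographic product
  the side \<open>V\<^sub>H\<close> must itself have odd colour classes; a strong odd colouring of \<open>H + K\<^sub>1\<close> gives
  this, because the apex sees all of \<open>H\<close>, and removing the apex colour leaves one colour fewer.\<close>

definition odd_classes :: "'a set \<Rightarrow> ('a \<Rightarrow> nat) \<Rightarrow> bool" where
  "odd_classes S f \<longleftrightarrow> (\<forall>c. card {u \<in> S. f u = c} = 0 \<or> odd (card {u \<in> S. f u = c}))"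

lemma odd_classesD: "odd_classes S f \<Longrightarrow> card {u \<in> S. f u = c} = 0 \<or> odd (card {u \<in> S. f u = c})"
  unfolding odd_classes_def by blast

lemma odd_classes_inj_on:
  assumes "inj_on f S"
  shows "odd_classes S f"
  unfolding odd_classes_def
proof
  fix c
  show "card {u \<in> S. f u = c} = 0 \<or> odd (card {u \<in> S. f u = c})"
  proof (cases "{u \<in> S. f u = c} = {}")
    case False
    then obtain w where "w \<in> S" "f w = c" by blast
    then have "{u \<in> S. f u = c} = {w}" using assms by (auto dest: inj_onD)
    then show ?thesis by simp
  qed (simp only: card.empty, simp)
qed

lemma odd_classes_singleton: "odd_classes {x} f"
  by (rule odd_classes_inj_on) simp

lemma odd_classes_Un:
  assumes "odd_classes S f" and "odd_classes T f" and "f ` S \<inter> f ` T = {}"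
  shows "odd_classes (S \<union> T) f"
  unfolding odd_classes_def
proof
  fix c
  consider "{u \<in> S \<union> T. f u = c} = {u \<in> S. f u = c}" | "{u \<in> S \<union> T. f u = c} = {u \<in> T. f u = c}"
    using assms(3) by blast
  then show "card {u \<in> S \<union> T. f u = c} = 0 \<or> odd (card {u \<in> S \<union> T. f u = c})"
    by cases (simp_all only: odd_classesD[OF assms(1)] odd_classesD[OF assms(2)])
qed

lemma odd_classes_insert:
  assumes "odd_classes S f" and "f x \<notin> f ` S"
  shows "odd_classes (insert x S) f"
proof -
  have "odd_classes ({x} \<union> S) f"
    using odd_classes_singleton assms(1) by (rule odd_classes_Un) (use assms(2) in auto)
  then show ?thesis by simp
qed

lemma odd_classes_subset:
  assumes "odd_classes T f" and "S \<subseteq> T" and "f ` (T - S) \<inter> f ` S = {}"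
  shows "odd_classes S f"
  unfolding odd_classes_def
proof
  fix c
  consider "{u \<in> S. f u = c} = {}" | "{u \<in> S. f u = c} = {u \<in> T. f u = c}"
    using assms(2,3) by blast
  then show "card {u \<in> S. f u = c} = 0 \<or> odd (card {u \<in> S. f u = c})"
    by cases (simp_all only: card.empty simp_thms odd_classesD[OF assms(1)])
qed

lemma odd_classes_image:
  assumes "odd_classes (h ` S) f" and "inj_on h S"
  shows "odd_classes S (f \<circ> h)"
  unfolding odd_classes_def
proof
  fix c
  have "{u \<in> h ` S. f u = c} = h ` {u \<in> S. (f \<circ> h) u = c}" by auto
  then have "card {u \<in> S. (f \<circ> h) u = c} = card {u \<in> h ` S. f u = c}"
    using assms(2) by (simp add: card_image inj_on_subset)
  then show "card {u \<in> S. (f \<circ> h) u = c} = 0 \<or> odd (card {u \<in> S. (f \<circ> h) u = c})"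
    using odd_classesD[OF assms(1), of c] by simp
qed

lemma odd_classes_comp:
  assumes "odd_classes S f" and "inj_on \<phi> (f ` S)"
  shows "odd_classes S (\<phi> \<circ> f)"
  unfolding odd_classes_def
proof
  fix c
  show "card {u \<in> S. (\<phi> \<circ> f) u = c} = 0 \<or> odd (card {u \<in> S. (\<phi> \<circ> f) u = c})"
  proof (cases "{u \<in> S. (\<phi> \<circ> f) u = c} = {}")
    case False
    then obtain w where w: "w \<in> S" "\<phi> (f w) = c" by auto
    have "{u \<in> S. (\<phi> \<circ> f) u = c} = {u \<in> S. f u = f w}"
      using w assms(2) by (auto dest: inj_onD)
    then show ?thesis using odd_classesD[OF assms(1)] by simp
  qed (simp only: card.empty, simp)
qed

lemma strong_odd_coloring_iff:
  "strong_odd_coloring V E f \<longleftrightarrow>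
     (\<forall>u\<in>V. \<forall>v\<in>V. E u v \<longrightarrow> f u \<noteq> f v) \<and> (\<forall>v\<in>V. odd_classes (nbhd V E v) f)"
proof -
  have "odd_classes (nbhd V E v) f \<longleftrightarrow> nbhd V E v \<noteq> {} \<longrightarrow>
      (\<forall>c. card {u \<in> nbhd V E v. f u = c} = 0 \<or> odd (card {u \<in> nbhd V E v. f u = c}))" for v
    unfolding odd_classes_def by (cases "nbhd V E v = {}") simp_all
  then show ?thesis unfolding strong_odd_coloring_def by presburger
qed

lemma nbhd_subset: "nbhd V E v \<subseteq> V"
  unfolding nbhd_def by blast

lemma strong_odd_coloring_adj:
  assumes "strong_odd_coloring V E f" and "E u v" and "u \<in> V" and "v \<in> V"
  shows "f u \<noteq> f v"
  using assms unfolding strong_odd_coloring_iff by blast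

lemma strong_odd_coloring_odd_classes:
  assumes "strong_odd_coloring V E f" and "v \<in> V"
  shows "odd_classes (nbhd V E v) f"
  using assms unfolding strong_odd_coloring_iff by blast

lemma strong_odd_coloring_nbhd:
  assumes "strong_odd_coloring V E f" and "v \<in> V"
  shows "f v \<notin> f ` nbhd V E v"
  using assms unfolding strong_odd_coloring_iff nbhd_def by fastforce

lemma strong_odd_coloring_inj_on:
  assumes "inj_on f V" and "\<And>v. \<not> E v v"
  shows "strong_odd_coloring V E f"
  unfolding strong_odd_coloring_iff
proof (intro conjI ballI impI)
  fix u v assume "u \<in> V" "v \<in> V" "E u v"
  moreover from \<open>E u v\<close> have "u \<noteq> v" using assms(2) by blast
  ultimately show "f u \<noteq> f v" using assms(1) by (simp add: inj_on_eq_iff)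
next
  fix v
  show "odd_classes (nbhd V E v) f"
    by (rule odd_classes_inj_on[OF inj_on_subset[OF assms(1) nbhd_subset]])
qed

lemma strong_odd_coloring_comp:
  assumes "strong_odd_coloring V E f" and "inj_on \<phi> (f ` V)"
  shows "strong_odd_coloring V E (\<phi> \<circ> f)"
  unfolding strong_odd_coloring_iff
proof (intro conjI ballI impI)
  fix u v assume "u \<in> V" "v \<in> V" "E u v"
  then show "(\<phi> \<circ> f) u \<noteq> (\<phi> \<circ> f) v"
    using strong_odd_coloring_adj[OF assms(1) \<open>E u v\<close>] assms(2) by (auto dest: inj_onD)
next
  fix v assume "v \<in> V"
  have "inj_on \<phi> (f ` nbhd V E v)"
    by (rule inj_on_subset[OF assms(2) image_mono[OF nbhd_subset]])
  with strong_odd_coloring_odd_classes[OF assms(1) \<open>v \<in> V\<close>]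
  show "odd_classes (nbhd V E v) (\<phi> \<circ> f)" by (rule odd_classes_comp)
qed

lemma chi_so_le:
  assumes "strong_odd_coloring V E f" and "f ` V \<subseteq> {..<k}"
  shows "chi_so V E \<le> k"
  unfolding chi_so_def using assms by (intro Least_le) blast

lemma chi_so_attained:
  assumes "finite V" and "\<And>v. \<not> E v v"
  obtains f where "strong_odd_coloring V E f" and "f ` V \<subseteq> {..<chi_so V E}"
proof -
  obtain f :: "'a \<Rightarrow> nat" and n where "f ` V = {i. i < n}" and "inj_on f V"
    using finite_imp_inj_to_nat_seg[OF assms(1)] by blast
  moreover from \<open>inj_on f V\<close> have "strong_odd_coloring V E f"
    using assms(2) by (rule strong_odd_coloring_inj_on)
  ultimately have "\<exists>k f. strong_odd_coloring V E f \<and> f ` V \<subseteq> {..<k}" by blast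
  then have "\<exists>f. strong_odd_coloring V E f \<and> f ` V \<subseteq> {..<chi_so V E}"
    unfolding chi_so_def by (rule LeastI_ex)
  then show ?thesis using that by blast
qed

subsection \<open>Colourings of the cone \<open>H + K\<^sub>1\<close>\<close>

lemma nbhd_cone_Some:
  assumes "h \<in> VH"
  shows "nbhd (cone_V VH) (cone_E VH EH) (Some h) = insert None (Some ` nbhd VH EH h)"
proof (rule set_eqI)
  fix u show "u \<in> nbhd (cone_V VH) (cone_E VH EH) (Some h) \<longleftrightarrow> u \<in> insert None (Some ` nbhd VH EH h)"
    using assms by (cases u) (auto simp: nbhd_def cone_V_def)
qed

lemma nbhd_cone_None: "nbhd (cone_V VH) (cone_E VH EH) None = Some ` VH"
proof (rule set_eqI)
  fix u show "u \<in> nbhd (cone_V VH) (cone_E VH EH) None \<longleftrightarrow> u \<in> Some ` VH"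
    by (cases u) (auto simp: nbhd_def cone_V_def)
qed

lemma strong_odd_coloring_cone_restrict:
  assumes c: "strong_odd_coloring (cone_V VH) (cone_E VH EH) c"
  shows "strong_odd_coloring VH EH (c \<circ> Some)"
    and "odd_classes VH (c \<circ> Some)"
    and "c None \<notin> (c \<circ> Some) ` VH"
proof -
  have apex: "None \<in> cone_V VH" and base: "\<And>h. h \<in> VH \<Longrightarrow> Some h \<in> cone_V VH"
    unfolding cone_V_def by auto
  show apex_color: "c None \<notin> (c \<circ> Some) ` VH"
    using strong_odd_coloring_adj[OF c _ apex base] by fastforce
  show "odd_classes VH (c \<circ> Some)"
    using strong_odd_coloring_odd_classes[OF c apex] unfolding nbhd_cone_None
    by (rule odd_classes_image) simp
  show "strong_odd_coloring VH EH (c \<circ> Some)"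
    unfolding strong_odd_coloring_iff
  proof (intro conjI ballI impI)
    fix u v assume "u \<in> VH" "v \<in> VH" "EH u v"
    then show "(c \<circ> Some) u \<noteq> (c \<circ> Some) v"
      using strong_odd_coloring_adj[OF c _ base base] by simp
  next
    fix h assume "h \<in> VH"
    have "odd_classes (Some ` nbhd VH EH h) c"
    proof (rule odd_classes_subset)
      show "odd_classes (insert None (Some ` nbhd VH EH h)) c"
        using strong_odd_coloring_odd_classes[OF c base[OF \<open>h \<in> VH\<close>]]
        unfolding nbhd_cone_Some[OF \<open>h \<in> VH\<close>] .
      show "c ` (insert None (Some ` nbhd VH EH h) - Some ` nbhd VH EH h) \<inter> c ` Some ` nbhd VH EH h = {}"
        using apex_color nbhd_subset[of VH EH h] by auto
    qed blast
    then show "odd_classes (nbhd VH EH h) (c \<circ> Some)" by (rule odd_classes_image) simp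
  qed
qed

definition drop_color :: "nat \<Rightarrow> nat \<Rightarrow> nat" where
  "drop_color c\<^sub>0 c = (if c < c\<^sub>0 then c else c - 1)"

lemma inj_on_drop_color: "inj_on (drop_color c\<^sub>0) (- {c\<^sub>0})"
  by (rule inj_onI) (auto simp: drop_color_def split: if_splits)

lemma drop_color_less:
  assumes "c < k" and "c\<^sub>0 < k" and "c \<noteq> c\<^sub>0"
  shows "drop_color c\<^sub>0 c < k - 1"
  using assms unfolding drop_color_def by auto

lemma strong_odd_coloring_of_cone:
  assumes "strong_odd_coloring (cone_V VH) (cone_E VH EH) c" and "c ` cone_V VH \<subseteq> {..<k}"
  obtains g where "strong_odd_coloring VH EH g" and "odd_classes VH g" and "g ` VH \<subseteq> {..<k - 1}"
proof
  let ?g = "drop_color (c None) \<circ> (c \<circ> Some)"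
  have inj: "inj_on (drop_color (c None)) ((c \<circ> Some) ` VH)"
    using strong_odd_coloring_cone_restrict(3)[OF assms(1)]
    by (blast intro: inj_on_subset[OF inj_on_drop_color])
  show "strong_odd_coloring VH EH ?g"
    using strong_odd_coloring_cone_restrict(1)[OF assms(1)] inj by (rule strong_odd_coloring_comp)
  show "odd_classes VH ?g"
    using strong_odd_coloring_cone_restrict(2)[OF assms(1)] inj by (rule odd_classes_comp)
  show "?g ` VH \<subseteq> {..<k - 1}"
  proof (rule image_subsetI)
    fix h assume "h \<in> VH"
    then have "c (Some h) < k" and "c None < k" and "c (Some h) \<noteq> c None"
      using assms(2) strong_odd_coloring_cone_restrict(3)[OF assms(1)]
      by (auto simp: cone_V_def image_iff)
    then show "?g h \<in> {..<k - 1}" using drop_color_less by simp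
  qed
qed

subsection \<open>Pair colourings\<close>

definition pair_coloring :: "nat \<Rightarrow> ('a \<Rightarrow> nat) \<Rightarrow> ('b \<Rightarrow> nat) \<Rightarrow> 'a \<times> 'b \<Rightarrow> nat" where
  "pair_coloring b f g = (\<lambda>(x, y). f x * b + g y)"

lemma pair_coloring_eq_iff:
  assumes "g y < b"
  shows "pair_coloring b f g (x, y) = c \<longleftrightarrow> f x = c div b \<and> g y = c mod b"
  using assms unfolding pair_coloring_def by auto

lemma pair_coloring_div:
  assumes "g y < b"
  shows "pair_coloring b f g (x, y) div b = f x"
  using assms unfolding pair_coloring_def by simp

lemma pair_coloring_mod:
  assumes "g y < b"
  shows "pair_coloring b f g (x, y) mod b = g y"
  using assms unfolding pair_coloring_def by simp

lemma pair_coloring_less: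
  assumes "f x < a" and "g y < b"
  shows "pair_coloring b f g (x, y) < a * b"
proof -
  have "f x * b + g y < (f x + 1) * b" using assms(2) by simp
  also have "\<dots> \<le> a * b" using assms(1) by (intro mult_right_mono) auto
  finally show ?thesis unfolding pair_coloring_def by simp
qed

lemma odd_classes_Times:
  assumes "odd_classes A f" and "odd_classes B g" and "g ` B \<subseteq> {..<b}"
  shows "odd_classes (A \<times> B) (pair_coloring b f g)"
  unfolding odd_classes_def
proof
  fix c
  have "{u \<in> A \<times> B. pair_coloring b f g u = c} = {x \<in> A. f x = c div b} \<times> {y \<in> B. g y = c mod b}"
    using assms(3) pair_coloring_eq_iff[of g _ b f _ c] by fastforce
  then have "card {u \<in> A \<times> B. pair_coloring b f g u = c}
      = card {x \<in> A. f x = c div b} * card {y \<in> B. g y = c mod b}"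
    by (simp add: card_cartesian_product)
  then show "card {u \<in> A \<times> B. pair_coloring b f g u = c} = 0
      \<or> odd (card {u \<in> A \<times> B. pair_coloring b f g u = c})"
    using odd_classesD[OF assms(1), of "c div b"] odd_classesD[OF assms(2), of "c mod b"] by auto
qed

lemma odd_classes_Times_Un:
  assumes "odd_classes A f" and "odd_classes B g" and "odd_classes C g" and "f x \<notin> f ` A"
    and "g ` B \<subseteq> {..<b}" and "g ` C \<subseteq> {..<b}"
  shows "odd_classes (A \<times> B \<union> {x} \<times> C) (pair_coloring b f g)"
proof (rule odd_classes_Un)
  show "odd_classes (A \<times> B) (pair_coloring b f g)"
    using assms(1,2,5) by (rule odd_classes_Times)
  show "odd_classes ({x} \<times> C) (pair_coloring b f g)"
    using odd_classes_singleton assms(3,6) by (rule odd_classes_Times)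
  have div_AB: "pair_coloring b f g (x', y') div b \<in> f ` A" if "x' \<in> A" and "y' \<in> B" for x' y'
    using that assms(5) by (auto simp: pair_coloring_div)
  have div_xC: "pair_coloring b f g (x, y') div b = f x" if "y' \<in> C" for y'
    using that assms(6) by (auto simp: pair_coloring_div)
  show "pair_coloring b f g ` (A \<times> B) \<inter> pair_coloring b f g ` ({x} \<times> C) = {}"
  proof (rule equals0I)
    fix z assume "z \<in> pair_coloring b f g ` (A \<times> B) \<inter> pair_coloring b f g ` ({x} \<times> C)"
    then obtain x' y' y'' where "x' \<in> A" "y' \<in> B" "y'' \<in> C"
      and "z = pair_coloring b f g (x', y')" and "z = pair_coloring b f g (x, y'')" by blast
    then show False using div_AB div_xC assms(4) by metis
  qed
qed

lemma strong_odd_coloring_pair_coloring: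
  assumes "g ` VH \<subseteq> {..<b}"
    and "\<And>x y x' y'. E (x, y) (x', y') \<Longrightarrow> x \<in> VG \<Longrightarrow> y \<in> VH \<Longrightarrow> x' \<in> VG \<Longrightarrow> y' \<in> VH
      \<Longrightarrow> f x \<noteq> f x' \<or> g y \<noteq> g y'"
    and "\<And>x y. x \<in> VG \<Longrightarrow> y \<in> VH \<Longrightarrow> odd_classes (nbhd (VG \<times> VH) E (x, y)) (pair_coloring b f g)"
  shows "strong_odd_coloring (VG \<times> VH) E (pair_coloring b f g)"
  unfolding strong_odd_coloring_iff
proof (intro conjI ballI impI)
  fix u v assume "u \<in> VG \<times> VH" "v \<in> VG \<times> VH" "E u v"
  then obtain x y x' y' where uv: "u = (x, y)" "v = (x', y')"
    and "f x \<noteq> f x' \<or> g y \<noteq> g y'" and "g y < b" "g y' < b"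
    using assms(1,2) by force
  then show "pair_coloring b f g u \<noteq> pair_coloring b f g v"
    by (metis pair_coloring_div pair_coloring_mod)
next
  fix v assume "v \<in> VG \<times> VH"
  then show "odd_classes (nbhd (VG \<times> VH) E v) (pair_coloring b f g)"
    using assms(3) by auto
qed

lemma chi_so_le_pair_coloring:
  assumes "strong_odd_coloring (VG \<times> VH) E (pair_coloring b f g)"
    and "f ` VG \<subseteq> {..<a}" and "g ` VH \<subseteq> {..<b}"
  shows "chi_so (VG \<times> VH) E \<le> a * b"
proof (rule chi_so_le[OF assms(1)], rule image_subsetI)
  fix u assume "u \<in> VG \<times> VH"
  then show "pair_coloring b f g u \<in> {..<a * b}"
    using assms(2,3) pair_coloring_less[of f _ a g _ b] by force
qed

subsection \<open>Graph products\<close>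

lemma nbhd_cart_prod:
  assumes "x \<in> VG" and "y \<in> VH"
  shows "nbhd (VG \<times> VH) (cart_prod_E VG EG VH EH) (x, y)
    = nbhd VG EG x \<times> {y} \<union> {x} \<times> nbhd VH EH y"
  using assms unfolding nbhd_def cart_prod_E_def by auto

lemma nbhd_direct_prod:
  assumes "x \<in> VG" and "y \<in> VH"
  shows "nbhd (VG \<times> VH) (direct_prod_E VG EG VH EH) (x, y) = nbhd VG EG x \<times> nbhd VH EH y"
  using assms unfolding nbhd_def direct_prod_E_def by auto

lemma nbhd_strong_prod:
  assumes "x \<in> VG" and "y \<in> VH" and "\<not> EG x x" and "\<not> EH y y"
  shows "nbhd (VG \<times> VH) (strong_prod_E VG EG VH EH) (x, y)
    = nbhd VG EG x \<times> insert y (nbhd VH EH y) \<union> {x} \<times> nbhd VH EH y"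
  using assms unfolding nbhd_def strong_prod_E_def by auto

lemma nbhd_lex_prod:
  assumes "x \<in> VG" and "y \<in> VH"
  shows "nbhd (VG \<times> VH) (lex_prod_E VG EG VH EH) (x, y) = nbhd VG EG x \<times> VH \<union> {x} \<times> nbhd VH EH y"
  using assms unfolding nbhd_def lex_prod_E_def by auto

lemma strong_odd_coloring_cart_prod:
  assumes f: "strong_odd_coloring VG EG f" and g: "strong_odd_coloring VH EH g"
    and g_range: "g ` VH \<subseteq> {..<b}"
  shows "strong_odd_coloring (VG \<times> VH) (cart_prod_E VG EG VH EH) (pair_coloring b f g)"
proof (rule strong_odd_coloring_pair_coloring[OF g_range])
  fix x y x' y' assume "cart_prod_E VG EG VH EH (x, y) (x', y')"
    "x \<in> VG" "y \<in> VH" "x' \<in> VG" "y' \<in> VH"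
  then show "f x \<noteq> f x' \<or> g y \<noteq> g y'"
    using strong_odd_coloring_adj[OF f, of x x'] strong_odd_coloring_adj[OF g, of y y']
    unfolding cart_prod_E_def by auto
next
  fix x y assume x: "x \<in> VG" and y: "y \<in> VH"
  have "odd_classes (nbhd VG EG x \<times> {y} \<union> {x} \<times> nbhd VH EH y) (pair_coloring b f g)"
  proof (rule odd_classes_Times_Un)
    show "odd_classes (nbhd VG EG x) f" using f x by (rule strong_odd_coloring_odd_classes)
    show "odd_classes {y} g" by (rule odd_classes_singleton)
    show "odd_classes (nbhd VH EH y) g" using g y by (rule strong_odd_coloring_odd_classes)
    show "f x \<notin> f ` nbhd VG EG x" using f x by (rule strong_odd_coloring_nbhd)
    show "g ` {y} \<subseteq> {..<b}" using g_range y by blast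
    show "g ` nbhd VH EH y \<subseteq> {..<b}" using g_range nbhd_subset[of VH EH y] by blast
  qed
  then show "odd_classes (nbhd (VG \<times> VH) (cart_prod_E VG EG VH EH) (x, y)) (pair_coloring b f g)"
    using x y by (simp add: nbhd_cart_prod)
qed

lemma strong_odd_coloring_direct_prod:
  assumes f: "strong_odd_coloring VG EG f" and g: "strong_odd_coloring VH EH g"
    and g_range: "g ` VH \<subseteq> {..<b}"
  shows "strong_odd_coloring (VG \<times> VH) (direct_prod_E VG EG VH EH) (pair_coloring b f g)"
proof (rule strong_odd_coloring_pair_coloring[OF g_range])
  fix x y x' y' assume "direct_prod_E VG EG VH EH (x, y) (x', y')"
    "x \<in> VG" "y \<in> VH" "x' \<in> VG" "y' \<in> VH"
  then show "f x \<noteq> f x' \<or> g y \<noteq> g y'"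
    using strong_odd_coloring_adj[OF f, of x x'] unfolding direct_prod_E_def by auto
next
  fix x y assume x: "x \<in> VG" and y: "y \<in> VH"
  have "odd_classes (nbhd VG EG x \<times> nbhd VH EH y) (pair_coloring b f g)"
  proof (rule odd_classes_Times)
    show "odd_classes (nbhd VG EG x) f" using f x by (rule strong_odd_coloring_odd_classes)
    show "odd_classes (nbhd VH EH y) g" using g y by (rule strong_odd_coloring_odd_classes)
    show "g ` nbhd VH EH y \<subseteq> {..<b}" using g_range nbhd_subset[of VH EH y] by blast
  qed
  then show "odd_classes (nbhd (VG \<times> VH) (direct_prod_E VG EG VH EH) (x, y)) (pair_coloring b f g)"
    using x y by (simp add: nbhd_direct_prod)
qed

lemma strong_odd_coloring_strong_prod:
  assumes f: "strong_odd_coloring VG EG f" and g: "strong_odd_coloring VH EH g"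
    and g_range: "g ` VH \<subseteq> {..<b}" and "\<And>x. \<not> EG x x" and "\<And>y. \<not> EH y y"
  shows "strong_odd_coloring (VG \<times> VH) (strong_prod_E VG EG VH EH) (pair_coloring b f g)"
proof (rule strong_odd_coloring_pair_coloring[OF g_range])
  fix x y x' y' assume "strong_prod_E VG EG VH EH (x, y) (x', y')"
    "x \<in> VG" "y \<in> VH" "x' \<in> VG" "y' \<in> VH"
  then show "f x \<noteq> f x' \<or> g y \<noteq> g y'"
    using strong_odd_coloring_adj[OF f, of x x'] strong_odd_coloring_adj[OF g, of y y']
    unfolding strong_prod_E_def by auto
next
  fix x y assume x: "x \<in> VG" and y: "y \<in> VH"
  have "odd_classes (nbhd VG EG x \<times> insert y (nbhd VH EH y) \<union> {x} \<times> nbhd VH EH y)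
      (pair_coloring b f g)"
  proof (rule odd_classes_Times_Un)
    show "odd_classes (nbhd VG EG x) f" using f x by (rule strong_odd_coloring_odd_classes)
    show "odd_classes (nbhd VH EH y) g" using g y by (rule strong_odd_coloring_odd_classes)
    then show "odd_classes (insert y (nbhd VH EH y)) g"
      using strong_odd_coloring_nbhd[OF g y] by (rule odd_classes_insert)
    show "f x \<notin> f ` nbhd VG EG x" using f x by (rule strong_odd_coloring_nbhd)
    show "g ` nbhd VH EH y \<subseteq> {..<b}" using g_range nbhd_subset[of VH EH y] by blast
    then show "g ` insert y (nbhd VH EH y) \<subseteq> {..<b}" using g_range y by blast
  qed
  then show "odd_classes (nbhd (VG \<times> VH) (strong_prod_E VG EG VH EH) (x, y)) (pair_coloring b f g)"
    using x y assms(4,5) by (simp add: nbhd_strong_prod)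
qed

lemma strong_odd_coloring_lex_prod:
  assumes f: "strong_odd_coloring VG EG f" and g: "strong_odd_coloring VH EH g"
    and g_range: "g ` VH \<subseteq> {..<b}" and g_odd: "odd_classes VH g"
  shows "strong_odd_coloring (VG \<times> VH) (lex_prod_E VG EG VH EH) (pair_coloring b f g)"
proof (rule strong_odd_coloring_pair_coloring[OF g_range])
  fix x y x' y' assume "lex_prod_E VG EG VH EH (x, y) (x', y')"
    "x \<in> VG" "y \<in> VH" "x' \<in> VG" "y' \<in> VH"
  then show "f x \<noteq> f x' \<or> g y \<noteq> g y'"
    using strong_odd_coloring_adj[OF f, of x x'] strong_odd_coloring_adj[OF g, of y y']
    unfolding lex_prod_E_def by auto
next
  fix x y assume x: "x \<in> VG" and y: "y \<in> VH"
  have "odd_classes (nbhd VG EG x \<times> VH \<union> {x} \<times> nbhd VH EH y) (pair_coloring b f g)"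
  proof (rule odd_classes_Times_Un)
    show "odd_classes (nbhd VG EG x) f" using f x by (rule strong_odd_coloring_odd_classes)
    show "odd_classes (nbhd VH EH y) g" using g y by (rule strong_odd_coloring_odd_classes)
    show "f x \<notin> f ` nbhd VG EG x" using f x by (rule strong_odd_coloring_nbhd)
    show "g ` nbhd VH EH y \<subseteq> {..<b}" using g_range nbhd_subset[of VH EH y] by blast
  qed (fact g_odd g_range)+
  then show "odd_classes (nbhd (VG \<times> VH) (lex_prod_E VG EG VH EH) (x, y)) (pair_coloring b f g)"
    using x y by (simp add: nbhd_lex_prod)
qed

theorem theorem4p2:
  fixes VG :: "'a set" and EG :: "'a \<Rightarrow> 'a \<Rightarrow> bool"
    and VH :: "'b set" and EH :: "'b \<Rightarrow> 'b \<Rightarrow> bool"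
  assumes "graph VG EG" and "graph VH EH"
  shows "chi_so (VG \<times> VH) (cart_prod_E VG EG VH EH) \<le> chi_so VG EG * chi_so VH EH
    \<and> chi_so (VG \<times> VH) (direct_prod_E VG EG VH EH) \<le> chi_so VG EG * chi_so VH EH
    \<and> chi_so (VG \<times> VH) (strong_prod_E VG EG VH EH) \<le> chi_so VG EG * chi_so VH EH
    \<and> chi_so (VG \<times> VH) (lex_prod_E VG EG VH EH)
           \<le> chi_so VG EG * (chi_so (cone_V VH) (cone_E VH EH) - 1)"
proof -
  have "finite VG" and irrefl_G: "\<And>x. \<not> EG x x" and "finite VH" and irrefl_H: "\<And>y. \<not> EH y y"
    using assms unfolding graph_def by auto
  moreover have "finite (cone_V VH)" using \<open>finite VH\<close> unfolding cone_V_def by simp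
  moreover have "\<not> cone_E VH EH v v" for v using irrefl_H by (cases v) auto
  ultimately obtain f g c
    where f: "strong_odd_coloring VG EG f" "f ` VG \<subseteq> {..<chi_so VG EG}"
      and g: "strong_odd_coloring VH EH g" "g ` VH \<subseteq> {..<chi_so VH EH}"
      and c: "strong_odd_coloring (cone_V VH) (cone_E VH EH) c"
        "c ` cone_V VH \<subseteq> {..<chi_so (cone_V VH) (cone_E VH EH)}"
    by (metis chi_so_attained)
  obtain g' where "strong_odd_coloring VH EH g'" and "odd_classes VH g'"
    and g': "g' ` VH \<subseteq> {..<chi_so (cone_V VH) (cone_E VH EH) - 1}"
    using strong_odd_coloring_of_cone[OF c] .
  then have "strong_odd_coloring (VG \<times> VH) (lex_prod_E VG EG VH EH)
      (pair_coloring (chi_so (cone_V VH) (cone_E VH EH) - 1) f g')"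
    using f(1) g' by (intro strong_odd_coloring_lex_prod)
  then show ?thesis
    using chi_so_le_pair_coloring[OF _ f(2) g(2)] chi_so_le_pair_coloring[OF _ f(2) g']
      strong_odd_coloring_cart_prod[OF f(1) g] strong_odd_coloring_direct_prod[OF f(1) g]
      strong_odd_coloring_strong_prod[OF f(1) g irrefl_G irrefl_H]
    by blast
qed

end
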